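(* Let $\mathbf D_0\in\mathcal D$ and let $k,t$ satisfy $k\mu(t)<1/2$. Consider the signal model below with the additional assumptions $\sigma=0$ (no noise) and $\Pr(|[\boldsymbol\alpha_0]_j|>\overline\alpha\mid j\in J)=0$ for some $\overline\alpha\ge\underline\alpha>0$. Let $\mathbf x=\mathbf D_0\boldsymbol\alpha_0$ be generated according to this model, with support $J$, and let $\lambda$ satisfy $\frac{\sqrt k\,\overline\alpha}{2-Q_t^2}t<\lambda\le\frac49\underline\alpha$, and $0\le t'\le t$. Then almost surely, uniformly for all $(\mathbf W,\mathbf v)\in\mathcal W_{\mathbf D_0}\times\mathcal S^p$, writing $\mathbf D(t')=\mathbf D(\mathbf W,\mathbf v,t')$: the vector $\hat{\boldsymbol\alpha}(t')$ with $\hat{\boldsymbol\alpha}(t')_J=\big([\mathbf D(t')]_J^\top[\mathbf D(t')]_J\big)^{-1}\big([\mathbf D(t')]_J^\top\mathbf x-\lambda\,\mathrm{sign}([\boldsymbol\alpha_0]_J)\big)$ and $\hat{\boldsymbol\alpha}(t')_{J^c}=\mathbf 0$ is the unique solution of $\min_{\boldsymbol\alpha\in\mathbb R^p}\frac12\|\mathbf x-\mathbf D(t')\boldsymbol\alpha\|_2^2+\lambda\|\boldsymbol\alpha\|_1$, and $\mathrm{sign}(\hat{\boldsymbol\alpha}(t'))=\mathrm{sign}(\boldsymbol\alpha_0)$.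
   Context: $\mathcal D$: real $m\times p$ matrices with unit $\ell_2$-norm columns; $\mu_0=\max_{i\ne j}|[\mathbf d_0^i]^\top\mathbf d_0^j|$, $\mu(t)=\mu_0+3t$, $Q_t=1/\sqrt{1-k\mu(t)}$. $\mathcal S^p$ unit sphere; $\mathcal W_{\mathbf D_0}=\{\mathbf W:\mathrm{diag}(\mathbf W^\top\mathbf D_0)=\mathbf 0,\mathrm{diag}(\mathbf W^\top\mathbf W)=\mathbf 1\}$; $\mathbf D(\mathbf W,\mathbf v,t)=\mathbf D_0\mathrm{Diag}[\cos(\mathbf vt)]+\mathbf W\mathrm{Diag}[\sin(\mathbf vt)]$. Signal model: random support $J$ with $|J|=k$; $[\boldsymbol\alpha_0]_j=0$ off $J$ and, on $J$, i.i.d. copies of $\alpha$ with $\mathbb Ee^{s\alpha}\le e^{c^2s^2/2}$ for all $s$ ($\sigma_\alpha$ smallest such $c$) and $\Pr(|\alpha|<\underline\alpha)=0$; support and coefficients independent. *)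

theory Defs
  imports "HOL-Probability.Probability" "Jordan_Normal_Form.Gauss_Jordan_Elimination"
begin

text \<open>Matrices are m x p real matrices represented as functions D i j (row i < m, column j < p);
  vectors in R^p as functions nat => real (entries at indices >= p are irrelevant / zero).\<close>

definition inner_cols :: "nat \<Rightarrow> (nat \<Rightarrow> nat \<Rightarrow> real) \<Rightarrow> (nat \<Rightarrow> nat \<Rightarrow> real) \<Rightarrow> nat \<Rightarrow> nat \<Rightarrow> real" where
  "inner_cols m A B i j = (\<Sum>r<m. A r i * B r j)"

definition dict_set :: "nat \<Rightarrow> nat \<Rightarrow> (nat \<Rightarrow> nat \<Rightarrow> real) set" where
  "dict_set m p = {D. \<forall>j<p. inner_cols m D D j j = 1}"

text \<open>Coherence mu_0 (convention: 0 when p <= 1, where the max is over the empty set).\<close>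
definition coherence :: "nat \<Rightarrow> nat \<Rightarrow> (nat \<Rightarrow> nat \<Rightarrow> real) \<Rightarrow> real" where
  "coherence m p D = (if p \<le> 1 then 0 else
     Max {\<bar>inner_cols m D D i j\<bar> | i j. i < p \<and> j < p \<and> i \<noteq> j})"

definition mu_t :: "nat \<Rightarrow> nat \<Rightarrow> (nat \<Rightarrow> nat \<Rightarrow> real) \<Rightarrow> real \<Rightarrow> real" where
  "mu_t m p D0 t = coherence m p D0 + 3 * t"

definition Q_t :: "nat \<Rightarrow> nat \<Rightarrow> (nat \<Rightarrow> nat \<Rightarrow> real) \<Rightarrow> nat \<Rightarrow> real \<Rightarrow> real" where
  "Q_t m p D0 k t = 1 / sqrt (1 - real k * mu_t m p D0 t)"

definition unit_sphere_p :: "nat \<Rightarrow> (nat \<Rightarrow> real) set" where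
  "unit_sphere_p p = {v. (\<Sum>j<p. (v j)\<^sup>2) = 1}"

definition W_set :: "nat \<Rightarrow> nat \<Rightarrow> (nat \<Rightarrow> nat \<Rightarrow> real) \<Rightarrow> (nat \<Rightarrow> nat \<Rightarrow> real) set" where
  "W_set m p D0 = {W. \<forall>j<p. inner_cols m W D0 j j = 0 \<and> inner_cols m W W j j = 1}"

definition D_path :: "(nat \<Rightarrow> nat \<Rightarrow> real) \<Rightarrow> (nat \<Rightarrow> nat \<Rightarrow> real) \<Rightarrow> (nat \<Rightarrow> real) \<Rightarrow> real \<Rightarrow> nat \<Rightarrow> nat \<Rightarrow> real" where
  "D_path D0 W v t i j = D0 i j * cos (v j * t) + W i j * sin (v j * t)"

definition mat_vec :: "nat \<Rightarrow> (nat \<Rightarrow> nat \<Rightarrow> real) \<Rightarrow> (nat \<Rightarrow> real) \<Rightarrow> nat \<Rightarrow> real" where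
  "mat_vec p D a i = (\<Sum>j<p. D i j * a j)"

definition lasso_obj :: "nat \<Rightarrow> nat \<Rightarrow> (nat \<Rightarrow> nat \<Rightarrow> real) \<Rightarrow> (nat \<Rightarrow> real) \<Rightarrow> real \<Rightarrow> (nat \<Rightarrow> real) \<Rightarrow> real" where
  "lasso_obj m p D x lam a = 1/2 * (\<Sum>i<m. (x i - mat_vec p D a i)\<^sup>2) + lam * (\<Sum>j<p. \<bar>a j\<bar>)"

definition vec_in :: "nat \<Rightarrow> (nat \<Rightarrow> real) \<Rightarrow> bool" where
  "vec_in p a \<longleftrightarrow> (\<forall>j\<ge>p. a j = 0)"

definition unique_lasso_solution :: "nat \<Rightarrow> nat \<Rightarrow> (nat \<Rightarrow> nat \<Rightarrow> real) \<Rightarrow> (nat \<Rightarrow> real) \<Rightarrow> real \<Rightarrow> (nat \<Rightarrow> real) \<Rightarrow> bool" where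
  "unique_lasso_solution m p D x lam a \<longleftrightarrow> vec_in p a \<and>
     (\<forall>b. vec_in p b \<longrightarrow> lasso_obj m p D x lam a \<le> lasso_obj m p D x lam b) \<and>
     (\<forall>b. vec_in p b \<longrightarrow> lasso_obj m p D x lam b \<le> lasso_obj m p D x lam a \<longrightarrow> b = a)"

definition sub_cols :: "nat \<Rightarrow> (nat \<Rightarrow> nat \<Rightarrow> real) \<Rightarrow> nat set \<Rightarrow> real mat" where
  "sub_cols m D J = mat m (card J) (\<lambda>(i, l). D i (sorted_list_of_set J ! l))"

definition alpha_hat :: "nat \<Rightarrow> (nat \<Rightarrow> nat \<Rightarrow> real) \<Rightarrow> nat set \<Rightarrow> (nat \<Rightarrow> real) \<Rightarrow> real \<Rightarrow> (nat \<Rightarrow> real) \<Rightarrow> nat \<Rightarrow> real" where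
  "alpha_hat m D J x lam s =
    (let js = sorted_list_of_set J;
         DJ = sub_cols m D J;
         G = transpose_mat DJ * DJ;
         r = mult_mat_vec (transpose_mat DJ) (vec m x) - lam \<cdot>\<^sub>v vec (card J) (\<lambda>l. sgn (s (js ! l)));
         y = mult_mat_vec (the (mat_inverse G)) r
     in (\<lambda>j. if j \<in> J then vec_index y (card {i \<in> J. i < j}) else 0))"

end

theory Submission
  imports Defs "Jordan_Normal_Form.Determinant"
begin

(* Almost surely every coefficient of alpha0 lies in [alo, ahi] in absolute value, and on that
   event the claim is deterministic. Every dictionary D on the path has unit columns, coherence at
   most mu0 + 3t, and is close to D0: ||x - D alpha0|| <= sqrt k * ahi * t =: E. Since
   nu = k mu < 1/2, the Gram matrix of the support columns is diagonally dominant, so alpha_hat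
   solves the normal equations and |alpha_hat - alpha0| <= (E + lam) / (1 - nu) < alo on J, which
   fixes the signs. Off the support, the correlation of a column with the residual x - D alpha_hat
   is at most E (projection residual of the noise) plus nu lam / (1 - nu) (shrinkage term), which
   the choice of lam keeps below lam; strict dual feasibility together with independent support
   columns makes alpha_hat the unique Lasso minimiser. *)

definition mat_tvec :: "nat \<Rightarrow> (nat \<Rightarrow> nat \<Rightarrow> real) \<Rightarrow> (nat \<Rightarrow> real) \<Rightarrow> nat \<Rightarrow> real" where
  "mat_tvec m D y j = (\<Sum>r<m. D r j * y r)"

definition gram_apply :: "nat \<Rightarrow> (nat \<Rightarrow> nat \<Rightarrow> real) \<Rightarrow> nat set \<Rightarrow> (nat \<Rightarrow> real) \<Rightarrow> nat \<Rightarrow> real" where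
  "gram_apply m D J u j = (\<Sum>i\<in>J. inner_cols m D D j i * u i)"

lemma mat_tvec_diff: "mat_tvec m D (\<lambda>r. y r - z r) j = mat_tvec m D y j - mat_tvec m D z j"
  unfolding mat_tvec_def by (simp add: right_diff_distrib sum_subtractf)

lemma gram_apply_diff: "gram_apply m D J (\<lambda>i. u i - w i) j = gram_apply m D J u j - gram_apply m D J w j"
  unfolding gram_apply_def by (simp add: right_diff_distrib sum_subtractf)

lemma mat_vec_supported:
  assumes "J \<subseteq> {..<p}" "\<And>j. j \<notin> J \<Longrightarrow> u j = 0"
  shows "mat_vec p D u r = (\<Sum>i\<in>J. D r i * u i)"
  unfolding mat_vec_def using assms by (intro sum.mono_neutral_right) auto

lemma gram_apply_eq_mat_tvec:
  "gram_apply m D J u j = mat_tvec m D (\<lambda>r. \<Sum>i\<in>J. D r i * u i) j"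
  unfolding gram_apply_def mat_tvec_def inner_cols_def sum_distrib_left sum_distrib_right
  by (subst sum.swap) (simp add: mult_ac)

lemma abs_mat_tvec_le_L2_set:
  assumes "inner_cols m D D j j = 1"
  shows "\<bar>mat_tvec m D y j\<bar> \<le> L2_set y {..<m}"
proof -
  have "\<bar>mat_tvec m D y j\<bar> \<le> (\<Sum>r<m. \<bar>D r j\<bar> * \<bar>y r\<bar>)"
    unfolding mat_tvec_def abs_mult[symmetric] by (rule sum_abs)
  also have "\<dots> \<le> L2_set (\<lambda>r. D r j) {..<m} * L2_set y {..<m}"
    by (rule L2_set_mult_ineq)
  also have "L2_set (\<lambda>r. D r j) {..<m} = 1"
    using assms unfolding inner_cols_def L2_set_def by (simp add: power2_eq_square)
  finally show ?thesis by simp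
qed

section \<open>Solving the normal equations on a support\<close>

lemma card_less_sorted_list_of_set_nth:
  fixes J :: "nat set"
  assumes "finite J" "l < card J"
  shows "card {i\<in>J. i < sorted_list_of_set J ! l} = l"
proof -
  let ?xs = "sorted_list_of_set J"
  have len: "length ?xs = card J" and sorted: "sorted_wrt (<) ?xs" and set: "set ?xs = J"
    using assms by simp_all
  have "{i\<in>J. i < ?xs ! l} = (\<lambda>i. ?xs ! i) ` {..<l}"
  proof (intro equalityI subsetI)
    fix y assume "y \<in> (\<lambda>i. ?xs ! i) ` {..<l}"
    then obtain i where "i < l" "y = ?xs ! i" by auto
    then show "y \<in> {i\<in>J. i < ?xs ! l}"
      using sorted_wrt_nth_less[OF sorted] assms len set by (metis less_trans mem_Collect_eq nth_mem)
  next
    fix y assume y: "y \<in> {i\<in>J. i < ?xs ! l}"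
    then obtain q where q: "q < length ?xs" "y = ?xs ! q"
      using set by (metis (no_types, lifting) in_set_conv_nth mem_Collect_eq)
    have "q < l"
      using y q sorted_nth_mono[of ?xs l q] assms len by (metis leI mem_Collect_eq not_less sorted_sorted_list_of_set)
    then show "y \<in> (\<lambda>i. ?xs ! i) ` {..<l}" using q by auto
  qed
  moreover have "inj_on (\<lambda>i. ?xs ! i) {..<l}"
    using assms len by (simp add: inj_on_def nth_eq_iff_index_eq)
  ultimately show ?thesis by (simp add: card_image)
qed

lemma sorted_list_of_set_nth_card_less:
  fixes J :: "nat set"
  assumes "finite J" "j \<in> J"
  shows "card {i\<in>J. i < j} < card J" "sorted_list_of_set J ! card {i\<in>J. i < j} = j"
proof -
  obtain l where "l < card J" "sorted_list_of_set J ! l = j"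
    using assms by (metis in_set_conv_nth length_sorted_list_of_set set_sorted_list_of_set)
  then show "card {i\<in>J. i < j} < card J" "sorted_list_of_set J ! card {i\<in>J. i < j} = j"
    using card_less_sorted_list_of_set_nth[OF assms(1)] by auto
qed

lemma sorted_list_of_set_nth_mem: "finite (J::nat set) \<Longrightarrow> l < card J \<Longrightarrow> sorted_list_of_set J ! l \<in> J"
  by (metis length_sorted_list_of_set nth_mem set_sorted_list_of_set)

lemma sum_sorted_list_of_set_nth:
  assumes "finite J"
  shows "(\<Sum>l<card J. g (sorted_list_of_set J ! l)) = (\<Sum>i\<in>J. g i)"
proof -
  have "(\<Sum>i\<in>J. g i) = sum_list (map g (sorted_list_of_set J))"
    using assms by (simp add: sum.distinct_set_conv_list[symmetric])
  also have "\<dots> = (\<Sum>l<card J. g (sorted_list_of_set J ! l))"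
    by (simp add: sum_list_sum_nth atLeast0LessThan)
  finally show ?thesis by simp
qed

(* Position l of a vector of length card J becomes coordinate sorted_list_of_set J ! l, as in alpha_hat. *)

definition spread_vec :: "nat set \<Rightarrow> real vec \<Rightarrow> nat \<Rightarrow> real" where
  "spread_vec J v i = (if i \<in> J then v $ card {q\<in>J. q < i} else 0)"

lemma gram_sub_cols_mult_vec:
  fixes D :: "nat \<Rightarrow> nat \<Rightarrow> real"
  assumes J: "finite J" and v: "v \<in> carrier_vec (card J)" and l: "l < card J"
  shows "((transpose_mat (sub_cols m D J) * sub_cols m D J) *\<^sub>v v) $ l
           = gram_apply m D J (spread_vec J v) (sorted_list_of_set J ! l)"
proof -
  let ?js = "sorted_list_of_set J" and ?G = "transpose_mat (sub_cols m D J) * sub_cols m D J"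
  have entry: "?G $$ (l, b) = inner_cols m D D (?js ! l) (?js ! b)" if "b < card J" for b
    using l that unfolding sub_cols_def inner_cols_def by (simp add: scalar_prod_def lessThan_atLeast0)
  have "(?G *\<^sub>v v) $ l = (\<Sum>b<card J. ?G $$ (l, b) * v $ b)"
    using v l by (simp add: sub_cols_def scalar_prod_def lessThan_atLeast0)
  also have "\<dots> = (\<Sum>b<card J. inner_cols m D D (?js ! l) (?js ! b) * spread_vec J v (?js ! b))"
    using J by (intro sum.cong refl)
      (simp add: entry spread_vec_def card_less_sorted_list_of_set_nth sorted_list_of_set_nth_mem)
  also have "\<dots> = gram_apply m D J (spread_vec J v) (?js ! l)"
    unfolding gram_apply_def by (rule sum_sorted_list_of_set_nth[OF J])
  finally show ?thesis .
qed

lemma alpha_hat_eq_spread_vec: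
  assumes "mat_inverse (transpose_mat (sub_cols m D J) * sub_cols m D J) = Some B"
  shows "alpha_hat m D J x lam s = spread_vec J (B *\<^sub>v
           (transpose_mat (sub_cols m D J) *\<^sub>v vec m x - lam \<cdot>\<^sub>v vec (card J) (\<lambda>l. sgn (s (sorted_list_of_set J ! l)))))"
  unfolding alpha_hat_def Let_def assms spread_vec_def by (rule ext) simp

lemma mat_inverse_gram_sub_cols:
  fixes D :: "nat \<Rightarrow> nat \<Rightarrow> real"
  assumes J: "finite J"
    and inj: "\<And>u. \<forall>j\<in>J. gram_apply m D J u j = 0 \<Longrightarrow> \<forall>j\<in>J. u j = 0"
  obtains B where "mat_inverse (transpose_mat (sub_cols m D J) * sub_cols m D J) = Some B"
    "(transpose_mat (sub_cols m D J) * sub_cols m D J) * B = 1\<^sub>m (card J)" "B \<in> carrier_mat (card J) (card J)"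
proof -
  let ?G = "transpose_mat (sub_cols m D J) * sub_cols m D J" and ?n = "card J"
  have G: "?G \<in> carrier_mat ?n ?n" by (auto simp: sub_cols_def intro!: mult_carrier_mat[of _ _ m])
  have "v = 0\<^sub>v ?n" if v: "v \<in> carrier_vec ?n" "?G *\<^sub>v v = 0\<^sub>v ?n" for v
  proof -
    have "\<forall>j\<in>J. gram_apply m D J (spread_vec J v) j = 0"
      using gram_sub_cols_mult_vec[OF J v(1)] sorted_list_of_set_nth_card_less[OF J] v(2)
      by (metis index_zero_vec(1))
    then have "\<forall>j\<in>J. spread_vec J v j = 0" by (rule inj)
    then show ?thesis
    proof (intro eq_vecI)
      fix i assume "i < dim_vec (0\<^sub>v ?n :: real vec)"
      then have i: "i < ?n" by simp
      then have "spread_vec J v (sorted_list_of_set J ! i) = v $ i"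
        using J by (simp add: spread_vec_def card_less_sorted_list_of_set_nth sorted_list_of_set_nth_mem)
      then show "v $ i = 0\<^sub>v ?n $ i"
        using \<open>\<forall>j\<in>J. spread_vec J v j = 0\<close> sorted_list_of_set_nth_mem[OF J i] i by simp
    qed (use v in simp)
  qed
  then have "det ?G \<noteq> 0" by (subst det_0_iff_vec_prod_zero[OF G]) blast
  then have unit: "?G \<in> Units (ring_mat TYPE(real) ?n ())" by (rule det_non_zero_imp_unit[OF G])
  obtain B where "mat_inverse ?G = Some B"
  proof (cases "mat_inverse ?G")
    case None
    show ?thesis using mat_inverse(1)[OF G None] unit by contradiction
  qed
  with mat_inverse(2)[OF G this] that show ?thesis by blast
qed

lemma alpha_hat_gram_apply:
  fixes D :: "nat \<Rightarrow> nat \<Rightarrow> real"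
  assumes J: "finite J" and j: "j \<in> J"
    and inj: "\<And>u. \<forall>j\<in>J. gram_apply m D J u j = 0 \<Longrightarrow> \<forall>j\<in>J. u j = 0"
  shows "gram_apply m D J (alpha_hat m D J x lam s) j = mat_tvec m D x j - lam * sgn (s j)"
proof -
  let ?js = "sorted_list_of_set J" and ?n = "card J" and ?DJ = "sub_cols m D J"
  let ?G = "transpose_mat ?DJ * ?DJ"
    and ?rhs = "transpose_mat ?DJ *\<^sub>v vec m x - lam \<cdot>\<^sub>v vec ?n (\<lambda>l. sgn (s (?js ! l)))"
  obtain B where B: "mat_inverse ?G = Some B" "?G * B = 1\<^sub>m ?n" "B \<in> carrier_mat ?n ?n"
    using mat_inverse_gram_sub_cols[OF J inj] by blast
  have G: "?G \<in> carrier_mat ?n ?n" and rhs: "?rhs \<in> carrier_vec ?n"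
    by (auto simp: sub_cols_def intro!: mult_carrier_mat[of _ _ m] minus_carrier_vec mult_mat_vec_carrier[of _ _ m])
  have solution: "?G *\<^sub>v (B *\<^sub>v ?rhs) = ?rhs"
    using assoc_mult_mat_vec[OF G B(3) rhs] B(2) rhs by simp
  let ?l = "card {i\<in>J. i < j}"
  have l: "?l < ?n" "?js ! ?l = j" using sorted_list_of_set_nth_card_less[OF J j] by auto
  have "gram_apply m D J (alpha_hat m D J x lam s) j = (?G *\<^sub>v (B *\<^sub>v ?rhs)) $ ?l"
    using gram_sub_cols_mult_vec[OF J _ l(1), of "B *\<^sub>v ?rhs"] B(3) rhs l(2)
    by (simp add: alpha_hat_eq_spread_vec[OF B(1)])
  also have "\<dots> = mat_tvec m D x j - lam * sgn (s j)"
    using solution l unfolding mat_tvec_def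
    by (simp add: sub_cols_def scalar_prod_def lessThan_atLeast0)
  finally show ?thesis .
qed

lemma alpha_hat_outside: "j \<notin> J \<Longrightarrow> alpha_hat m D J x lam s j = 0"
  unfolding alpha_hat_def Let_def by simp

section \<open>Optimality conditions for the Lasso\<close>

lemma mat_vec_diff: "mat_vec p D (\<lambda>j. u j - w j) r = mat_vec p D u r - mat_vec p D w r"
  unfolding mat_vec_def by (simp add: right_diff_distrib sum_subtractf)

lemma sum_mult_mat_vec: "(\<Sum>r<m. y r * mat_vec p D u r) = (\<Sum>j<p. mat_tvec m D y j * u j)"
  unfolding mat_vec_def mat_tvec_def sum_distrib_left sum_distrib_right
  by (subst sum.swap) (simp add: mult_ac)

lemma lasso_obj_diff:
  "lasso_obj m p D x lam b - lasso_obj m p D x lam h =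
     1/2 * (\<Sum>r<m. (mat_vec p D (\<lambda>j. b j - h j) r)\<^sup>2) +
     (\<Sum>j<p. lam * (\<bar>b j\<bar> - \<bar>h j\<bar>) - mat_tvec m D (\<lambda>r. x r - mat_vec p D h r) j * (b j - h j))"
proof -
  define y where "y r = x r - mat_vec p D h r" for r
  define u where "u j = b j - h j" for j
  have res: "x r - mat_vec p D b r = y r - mat_vec p D u r" for r
    unfolding y_def u_def mat_vec_diff by simp
  have "(\<Sum>r<m. (y r - mat_vec p D u r)\<^sup>2)
      = (\<Sum>r<m. (y r)\<^sup>2) - 2 * (\<Sum>r<m. y r * mat_vec p D u r) + (\<Sum>r<m. (mat_vec p D u r)\<^sup>2)"
    by (simp add: power2_diff sum.distrib sum_subtractf sum_distrib_left mult.assoc)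
  also have "(\<Sum>r<m. y r * mat_vec p D u r) = (\<Sum>j<p. mat_tvec m D y j * u j)"
    by (rule sum_mult_mat_vec)
  finally have quadratic: "(\<Sum>r<m. (y r - mat_vec p D u r)\<^sup>2)
      = (\<Sum>r<m. (y r)\<^sup>2) - 2 * (\<Sum>j<p. mat_tvec m D y j * u j) + (\<Sum>r<m. (mat_vec p D u r)\<^sup>2)" .
  have linear: "(\<Sum>j<p. lam * (\<bar>b j\<bar> - \<bar>h j\<bar>) - mat_tvec m D y j * u j)
      = lam * (\<Sum>j<p. \<bar>b j\<bar>) - lam * (\<Sum>j<p. \<bar>h j\<bar>) - (\<Sum>j<p. mat_tvec m D y j * u j)"
    by (simp add: sum_subtractf sum_distrib_left right_diff_distrib)
  show ?thesis
    unfolding lasso_obj_def res quadratic linear u_def[symmetric] y_def[symmetric]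
    by (simp add: field_simps)
qed

lemma strict_subgradient_gap:
  fixes b c lam :: real
  assumes "\<bar>c\<bar> < lam"
  shows "(lam - \<bar>c\<bar>) * \<bar>b\<bar> \<le> lam * \<bar>b\<bar> - c * b"
proof -
  have "c * b \<le> \<bar>c\<bar> * \<bar>b\<bar>" by (metis abs_ge_self abs_mult)
  then show ?thesis by (simp add: algebra_simps)
qed

lemma sgn_subgradient_gap:
  fixes b h lam :: real
  assumes "0 \<le> lam"
  shows "0 \<le> lam * (\<bar>b\<bar> - \<bar>h\<bar>) - lam * sgn h * (b - h)"
proof -
  have "sgn h * b \<le> \<bar>b\<bar>" "sgn h * h = \<bar>h\<bar>" by (auto simp: sgn_if)
  have "lam * (sgn h * b) \<le> lam * \<bar>b\<bar>" using \<open>sgn h * b \<le> \<bar>b\<bar>\<close> assms by (rule mult_left_mono)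
  with \<open>sgn h * h = \<bar>h\<bar>\<close> show ?thesis by (simp add: algebra_simps)
qed

lemma lasso_obj_growth:
  fixes D :: "nat \<Rightarrow> nat \<Rightarrow> real" and x h :: "nat \<Rightarrow> real" and m p :: nat
  defines "c \<equiv> mat_tvec m D (\<lambda>r. x r - mat_vec p D h r)"
  assumes h_supp: "\<And>j. j \<notin> J \<Longrightarrow> h j = 0" and lam: "0 \<le> lam"
    and on_supp: "\<And>j. j \<in> J \<Longrightarrow> c j = lam * sgn (h j)"
    and off_supp: "\<And>j. j < p \<Longrightarrow> j \<notin> J \<Longrightarrow> \<bar>c j\<bar> < lam"
  shows "1/2 * (\<Sum>r<m. (mat_vec p D (\<lambda>j. b j - h j) r)\<^sup>2) + (\<Sum>j\<in>{..<p} - J. (lam - \<bar>c j\<bar>) * \<bar>b j\<bar>)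
           \<le> lasso_obj m p D x lam b - lasso_obj m p D x lam h"
proof -
  define gap where "gap j = lam * (\<bar>b j\<bar> - \<bar>h j\<bar>) - c j * (b j - h j)" for j
  have off_gap: "(lam - \<bar>c j\<bar>) * \<bar>b j\<bar> \<le> gap j" if "j \<in> {..<p} - J" for j
    using strict_subgradient_gap[OF off_supp] h_supp that unfolding gap_def by auto
  have "0 \<le> gap j" if "j \<in> J" for j
    using sgn_subgradient_gap[OF lam, of "b j" "h j"] on_supp[OF that] unfolding gap_def by simp
  then have "(\<Sum>j\<in>{..<p} - J. gap j) \<le> (\<Sum>j<p. gap j)"
    by (intro sum_mono2) auto
  moreover have "(\<Sum>j\<in>{..<p} - J. (lam - \<bar>c j\<bar>) * \<bar>b j\<bar>) \<le> (\<Sum>j\<in>{..<p} - J. gap j)"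
    by (rule sum_mono) (rule off_gap)
  ultimately show ?thesis
    using lasso_obj_diff[of m p D x lam b h] unfolding gap_def c_def by linarith
qed

lemma unique_lasso_solutionI:
  fixes D :: "nat \<Rightarrow> nat \<Rightarrow> real"
  assumes J: "J \<subseteq> {..<p}" and h_supp: "\<And>j. j \<notin> J \<Longrightarrow> h j = 0" and lam: "0 < lam"
    and on_supp: "\<And>j. j \<in> J \<Longrightarrow> mat_tvec m D (\<lambda>r. x r - mat_vec p D h r) j = lam * sgn (h j)"
    and off_supp: "\<And>j. j < p \<Longrightarrow> j \<notin> J \<Longrightarrow> \<bar>mat_tvec m D (\<lambda>r. x r - mat_vec p D h r) j\<bar> < lam"
    and indep: "\<And>u. (\<And>j. j \<notin> J \<Longrightarrow> u j = 0) \<Longrightarrow> (\<And>r. r < m \<Longrightarrow> mat_vec p D u r = 0) \<Longrightarrow> u = (\<lambda>_. 0)"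
  shows "unique_lasso_solution m p D x lam h"
proof -
  let ?c = "mat_tvec m D (\<lambda>r. x r - mat_vec p D h r)"
  let ?Q = "\<lambda>b. \<Sum>r<m. (mat_vec p D (\<lambda>j. b j - h j) r)\<^sup>2"
    and ?L = "\<lambda>b. \<Sum>j\<in>{..<p} - J. (lam - \<bar>?c j\<bar>) * \<bar>b j\<bar>"
  have growth: "1/2 * ?Q b + ?L b \<le> lasso_obj m p D x lam b - lasso_obj m p D x lam h" for b
    using lasso_obj_growth[of J h lam m D x p b] h_supp lam on_supp off_supp by simp
  have nonneg: "0 \<le> ?Q b" "0 \<le> ?L b" for b
  proof -
    show "0 \<le> ?Q b" by (simp add: sum_nonneg)
    have "0 \<le> (lam - \<bar>?c j\<bar>) * \<bar>b j\<bar>" if "j \<in> {..<p} - J" for j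
      using off_supp[of j] that by simp
    then show "0 \<le> ?L b" by (rule sum_nonneg)
  qed
  have unique: "b = h" if b: "vec_in p b" and le: "lasso_obj m p D x lam b \<le> lasso_obj m p D x lam h" for b
  proof -
    have Q: "?Q b = 0" and L: "?L b = 0" using growth[of b] nonneg[of b] le by linarith+
    have Q0: "mat_vec p D (\<lambda>j. b j - h j) r = 0" if "r < m" for r
      using Q that by (simp add: sum_nonneg_eq_0_iff)
    have L0: "(lam - \<bar>?c j\<bar>) * \<bar>b j\<bar> = 0" if "j < p" "j \<notin> J" for j
      using L that off_supp sum_nonneg_eq_0_iff[of "{..<p} - J" "\<lambda>j. (lam - \<bar>?c j\<bar>) * \<bar>b j\<bar>"]
      by (simp add: less_imp_le)
    have "b j = 0" if "j \<notin> J" for j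
      using L0[of j] off_supp[of j] b that unfolding vec_in_def by (cases "j < p") auto
    then have "(\<lambda>j. b j - h j) = (\<lambda>_. 0)"
      using h_supp Q0 by (intro indep) auto
    then show ?thesis by (simp add: fun_eq_iff)
  qed
  have "vec_in p h" unfolding vec_in_def
  proof (intro allI impI)
    fix j :: nat assume "p \<le> j"
    then have "j \<notin> J" using J by auto
    then show "h j = 0" by (rule h_supp)
  qed
  moreover have "lasso_obj m p D x lam h \<le> lasso_obj m p D x lam b" for b
    using growth[of b] nonneg[of b] by linarith
  ultimately show ?thesis
    unfolding unique_lasso_solution_def using unique by blast
qed

section \<open>Recovery under a coherence condition\<close>

lemma diag_dominant_abs_le:
  fixes G :: "nat \<Rightarrow> nat \<Rightarrow> real"
  assumes fin: "finite J" and diag: "\<And>j. j \<in> J \<Longrightarrow> G j j = 1"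
    and off: "\<And>i j. i \<in> J \<Longrightarrow> j \<in> J \<Longrightarrow> i \<noteq> j \<Longrightarrow> \<bar>G j i\<bar> \<le> \<mu>" and mu: "0 \<le> \<mu>"
    and small: "real (card J) * \<mu> \<le> 1"
    and bound: "\<And>j. j \<in> J \<Longrightarrow> \<bar>\<Sum>i\<in>J. G j i * z i\<bar> \<le> R" and j: "j \<in> J"
  shows "\<bar>z j\<bar> * (1 - real (card J) * \<mu>) \<le> R"
proof -
  define Z where "Z = Max ((\<lambda>i. \<bar>z i\<bar>) ` J)"
  have "Z \<in> (\<lambda>i. \<bar>z i\<bar>) ` J" unfolding Z_def using fin j by (intro Max_in) auto
  then obtain j0 where j0: "j0 \<in> J" "\<bar>z j0\<bar> = Z" by auto
  have le_Z: "\<bar>z i\<bar> \<le> Z" if "i \<in> J" for i using fin that unfolding Z_def by simp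
  have "\<bar>\<Sum>i\<in>J-{j0}. G j0 i * z i\<bar> \<le> (\<Sum>i\<in>J-{j0}. \<mu> * Z)"
    by (rule order_trans[OF sum_abs sum_mono])
      (use off j0 le_Z mu in \<open>auto simp: abs_mult intro!: mult_mono\<close>)
  also have "\<dots> = real (card J - 1) * (\<mu> * Z)" using fin j0 by simp
  also have "\<dots> \<le> real (card J) * \<mu> * Z"
    using mu le_Z[OF j] by (simp add: mult.assoc mult_right_mono)
  moreover have "\<bar>z j0 + (\<Sum>i\<in>J-{j0}. G j0 i * z i)\<bar> \<le> R"
    using bound[OF j0(1)] sum.remove[OF fin j0(1), of "\<lambda>i. G j0 i * z i"] diag[OF j0(1)] by simp
  ultimately have "Z \<le> R + real (card J) * \<mu> * Z"
    using j0(2) by linarith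
  moreover have "\<bar>z j\<bar> * (1 - real (card J) * \<mu>) \<le> Z * (1 - real (card J) * \<mu>)"
    using le_Z[OF j] small by (intro mult_right_mono) auto
  ultimately show ?thesis by (simp add: algebra_simps)
qed

lemma L2_set_diff_le_of_orthogonal:
  fixes e w :: "'a \<Rightarrow> real"
  assumes "(\<Sum>r\<in>A. (e r - w r) * w r) = 0"
  shows "L2_set (\<lambda>r. e r - w r) A \<le> L2_set e A"
proof -
  have "(\<Sum>r\<in>A. (e r)\<^sup>2) = (\<Sum>r\<in>A. (e r - w r)\<^sup>2) + 2 * (\<Sum>r\<in>A. (e r - w r) * w r) + (\<Sum>r\<in>A. (w r)\<^sup>2)"
    by (simp add: sum.distrib[symmetric] sum_distrib_left power2_eq_square algebra_simps)
  then have "(\<Sum>r\<in>A. (e r - w r)\<^sup>2) \<le> (\<Sum>r\<in>A. (e r)\<^sup>2)"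
    using assms by (simp add: sum_nonneg)
  then show ?thesis unfolding L2_set_def by (rule real_sqrt_le_mono)
qed

lemma L2_set_residual_le_of_orthogonal:
  assumes "\<And>j. mat_tvec m D (\<lambda>r. e r - mat_vec p D u r) j * u j = 0"
  shows "L2_set (\<lambda>r. e r - mat_vec p D u r) {..<m} \<le> L2_set e {..<m}"
proof (rule L2_set_diff_le_of_orthogonal)
  show "(\<Sum>r<m. (e r - mat_vec p D u r) * mat_vec p D u r) = 0"
    unfolding sum_mult_mat_vec by (rule sum.neutral) (use assms in blast)
qed

lemma sgn_eq_if_abs_diff_less: "\<bar>y - x\<bar> < \<bar>x\<bar> \<Longrightarrow> sgn y = sgn (x::real)"
  by (auto simp: sgn_if abs_if split: if_splits)

locale coherent_support =
  fixes m p :: nat and D :: "nat \<Rightarrow> nat \<Rightarrow> real" and J :: "nat set" and \<mu> :: real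
  assumes support_subset: "J \<subseteq> {..<p}"
    and unit_cols: "\<And>j. j < p \<Longrightarrow> inner_cols m D D j j = 1"
    and coherence_le: "\<And>i j. i < p \<Longrightarrow> j \<in> J \<Longrightarrow> i \<noteq> j \<Longrightarrow> \<bar>inner_cols m D D i j\<bar> \<le> \<mu>"
    and mu_nonneg: "0 \<le> \<mu>"
    and card_mult_mu_less: "real (card J) * \<mu> < 1/2"
begin

lemma finite_support: "finite J"
  using support_subset finite_subset by blast

lemma support_less: "j \<in> J \<Longrightarrow> j < p"
  using support_subset by auto

lemma gram_apply_abs_le:
  assumes "\<And>j. j \<in> J \<Longrightarrow> \<bar>gram_apply m D J z j\<bar> \<le> R" and "j \<in> J"
  shows "\<bar>z j\<bar> * (1 - real (card J) * \<mu>) \<le> R"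
  using assms unfolding gram_apply_def
  by (intro diag_dominant_abs_le[OF finite_support, of "inner_cols m D D"])
    (use unit_cols coherence_le support_less mu_nonneg card_mult_mu_less in auto)

lemma gram_apply_eq_0_imp:
  assumes "\<And>j. j \<in> J \<Longrightarrow> gram_apply m D J u j = 0" and "j \<in> J"
  shows "u j = 0"
proof -
  have "\<bar>u j\<bar> * (1 - real (card J) * \<mu>) \<le> 0" using assms by (intro gram_apply_abs_le) auto
  with card_mult_mu_less show ?thesis by (simp add: mult_le_0_iff)
qed

lemma gram_apply_supported:
  assumes "\<And>i. i \<notin> J \<Longrightarrow> u i = 0"
  shows "gram_apply m D J u j = mat_tvec m D (mat_vec p D u) j"
proof -
  have "mat_vec p D u = (\<lambda>r. \<Sum>i\<in>J. D r i * u i)"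
    using mat_vec_supported[OF support_subset assms] by (rule ext)
  then show ?thesis by (simp add: gram_apply_eq_mat_tvec)
qed

lemma support_cols_independent:
  assumes supp: "\<And>j. j \<notin> J \<Longrightarrow> u j = 0" and zero: "\<And>r. r < m \<Longrightarrow> mat_vec p D u r = 0"
  shows "u = (\<lambda>_. 0)"
proof
  fix j
  have "mat_tvec m D (mat_vec p D u) i = 0" for i
    unfolding mat_tvec_def using zero by (intro sum.neutral) simp
  then have "gram_apply m D J u i = 0" for i
    using supp by (simp add: gram_apply_supported)
  then show "u j = 0" using supp gram_apply_eq_0_imp by (cases "j \<in> J") auto
qed

lemma alpha_hat_gram:
  "j \<in> J \<Longrightarrow> gram_apply m D J (alpha_hat m D J x lam s) j = mat_tvec m D x j - lam * sgn (s j)"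
  by (rule alpha_hat_gram_apply[OF finite_support]) (auto intro: gram_apply_eq_0_imp)

lemma gram_apply_off_support_abs_le:
  assumes "i < p" "i \<notin> J" "\<And>j. j \<in> J \<Longrightarrow> \<bar>z j\<bar> \<le> B"
  shows "\<bar>gram_apply m D J z i\<bar> \<le> real (card J) * \<mu> * B"
proof -
  have "\<bar>gram_apply m D J z i\<bar> \<le> (\<Sum>j\<in>J. \<bar>inner_cols m D D i j\<bar> * \<bar>z j\<bar>)"
    unfolding gram_apply_def abs_mult[symmetric] by (rule sum_abs)
  also have "\<dots> \<le> (\<Sum>j\<in>J. \<mu> * B)"
    using assms coherence_le mu_nonneg by (intro sum_mono mult_mono) auto
  finally show ?thesis by simp
qed

lemma alpha_hat_shrinkage_abs_le:
  assumes "j < p" "j \<notin> J" "0 \<le> lam"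
  shows "\<bar>gram_apply m D J (alpha_hat m D J (\<lambda>_. 0) lam s) j\<bar> * (1 - real (card J) * \<mu>)
           \<le> real (card J) * \<mu> * lam"
proof -
  define q where "q = 1 - real (card J) * \<mu>"
  have q: "1/2 < q" using card_mult_mu_less unfolding q_def by simp
  let ?d = "alpha_hat m D J (\<lambda>_. 0) lam s"
  have "\<bar>?d i\<bar> * q \<le> lam" if "i \<in> J" for i
    using gram_apply_abs_le[OF _ that, of ?d lam] alpha_hat_gram[of _ "\<lambda>_. 0" lam s] assms(3)
    unfolding q_def by (simp add: mat_tvec_def abs_mult abs_sgn_eq)
  then have "\<bar>?d i\<bar> \<le> lam / q" if "i \<in> J" for i
    using q that by (simp add: pos_le_divide_eq)
  then have "\<bar>gram_apply m D J ?d j\<bar> \<le> real (card J) * \<mu> * (lam / q)"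
    by (rule gram_apply_off_support_abs_le[OF assms(1,2)])
  then show ?thesis
    using q mult_right_mono[of _ _ q] unfolding q_def[symmetric] by (simp add: field_simps)
qed

context
  fixes a0 x :: "nat \<Rightarrow> real" and E lam :: real
  assumes signal_supported: "\<And>j. j \<notin> J \<Longrightarrow> a0 j = 0"
    and noise_le: "L2_set (\<lambda>r. x r - mat_vec p D a0 r) {..<m} \<le> E"
    and noise_less: "E * (1 - real (card J) * \<mu>) < lam * (1 - 2 * (real (card J) * \<mu>))"
    and lam_pos: "0 < lam"
begin

lemma alpha_hat_error_abs_le:
  assumes "j \<in> J"
  shows "\<bar>alpha_hat m D J x lam a0 j - a0 j\<bar> * (1 - real (card J) * \<mu>) \<le> E + lam"
proof (rule gram_apply_abs_le[OF _ assms])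
  fix i assume i: "i \<in> J"
  have "gram_apply m D J (\<lambda>j. alpha_hat m D J x lam a0 j - a0 j) i
      = mat_tvec m D (\<lambda>r. x r - mat_vec p D a0 r) i - lam * sgn (a0 i)"
    unfolding gram_apply_diff alpha_hat_gram[OF i] mat_tvec_diff
    using signal_supported by (simp add: gram_apply_supported)
  moreover have "\<bar>mat_tvec m D (\<lambda>r. x r - mat_vec p D a0 r) i\<bar> \<le> E"
    using abs_mat_tvec_le_L2_set[OF unit_cols[OF support_less[OF i]]] noise_le by (rule order_trans)
  moreover have "\<bar>lam * sgn (a0 i)\<bar> \<le> lam"
    using lam_pos by (simp add: abs_mult abs_sgn_eq)
  ultimately show "\<bar>gram_apply m D J (\<lambda>j. alpha_hat m D J x lam a0 j - a0 j) i\<bar> \<le> E + lam"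
    by linarith
qed

lemma alpha_hat_sgn_eq:
  assumes lower: "\<And>j. j \<in> J \<Longrightarrow> alo \<le> \<bar>a0 j\<bar>" and lam_le: "lam \<le> 4/9 * alo"
  shows "sgn (alpha_hat m D J x lam a0 j) = sgn (a0 j)"
proof (cases "j \<in> J")
  case False
  then show ?thesis using alpha_hat_outside signal_supported by simp
next
  case True
  define q where "q = 1 - real (card J) * \<mu>"
  define \<delta> where "\<delta> = \<bar>alpha_hat m D J x lam a0 j - a0 j\<bar>"
  have q: "1/2 < q" using card_mult_mu_less unfolding q_def by simp
  have "\<delta> * q * q \<le> (E + lam) * q"
    using alpha_hat_error_abs_le[OF True] q unfolding \<delta>_def q_def by (intro mult_right_mono) auto
  also have "\<dots> < lam * (3 * q - 1)"
    using noise_less unfolding q_def by (simp add: algebra_simps)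
  also have "\<dots> \<le> alo * (q * q)"
  proof -
    have "4/9 * (3 * q - 1) \<le> q * q"
      using zero_le_power2[of "3 * q - 2"] by (simp add: power2_eq_square algebra_simps)
    have "lam * (3 * q - 1) \<le> (4/9 * alo) * (3 * q - 1)"
      using lam_le q by (intro mult_right_mono) auto
    also have "\<dots> = alo * (4/9 * (3 * q - 1))" by simp
    also have "\<dots> \<le> alo * (q * q)"
      using \<open>4/9 * (3 * q - 1) \<le> q * q\<close> lam_le lam_pos by (intro mult_left_mono) auto
    finally show ?thesis .
  qed
  finally have "\<delta> < alo" using q by (simp add: mult.assoc)
  then show ?thesis
    using lower[OF True] unfolding \<delta>_def by (intro sgn_eq_if_abs_diff_less) simp
qed

lemma alpha_hat_residual_corr_less:
  assumes j: "j < p" "j \<notin> J"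
  shows "\<bar>mat_tvec m D (\<lambda>r. x r - mat_vec p D (alpha_hat m D J x lam a0) r) j\<bar> < lam"
proof -
  define q where "q = 1 - real (card J) * \<mu>"
  have q: "1/2 < q" using card_mult_mu_less unfolding q_def by simp
  define ah where "ah = alpha_hat m D J x lam a0"
  define d where "d = alpha_hat m D J (\<lambda>_. 0) lam a0"
  define res where "res r = x r - mat_vec p D (\<lambda>i. ah i - d i) r" for r
  have d_supp: "\<And>i. i \<notin> J \<Longrightarrow> d i = 0" and ah_supp: "\<And>i. i \<notin> J \<Longrightarrow> ah i = 0"
    by (simp_all add: d_def ah_def alpha_hat_outside)
  \<comment> \<open>res is the residual of projecting x onto the support columns, hence no longer than the noise\<close>
  have res_orth: "mat_tvec m D res i = 0" if "i \<in> J" for i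
  proof -
    have "\<And>k. k \<notin> J \<Longrightarrow> ah k - d k = 0" using ah_supp d_supp by simp
    then have "mat_tvec m D res i = mat_tvec m D x i - gram_apply m D J (\<lambda>k. ah k - d k) i"
      unfolding res_def mat_tvec_diff by (simp add: gram_apply_supported[of "\<lambda>k. ah k - d k"])
    also have "\<dots> = 0"
      unfolding gram_apply_diff ah_def d_def using alpha_hat_gram[OF that] by (simp add: mat_tvec_def)
    finally show ?thesis .
  qed
  have "res = (\<lambda>r. (x r - mat_vec p D a0 r) - mat_vec p D (\<lambda>i. ah i - d i - a0 i) r)"
    unfolding res_def mat_vec_diff by auto
  moreover have "mat_tvec m D res k * (ah k - d k - a0 k) = 0" for k
    by (cases "k \<in> J") (simp_all add: res_orth d_supp ah_supp signal_supported)
  ultimately have "L2_set res {..<m} \<le> L2_set (\<lambda>r. x r - mat_vec p D a0 r) {..<m}"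
    using L2_set_residual_le_of_orthogonal[of m D "\<lambda>r. x r - mat_vec p D a0 r" p "\<lambda>i. ah i - d i - a0 i"]
    by simp
  then have res_le: "\<bar>mat_tvec m D res j\<bar> \<le> E"
    using abs_mat_tvec_le_L2_set[OF unit_cols[OF j(1)], of res] noise_le by linarith
  have "mat_tvec m D (\<lambda>r. x r - mat_vec p D ah r) j = mat_tvec m D res j - gram_apply m D J d j"
    unfolding res_def mat_vec_diff mat_tvec_diff using d_supp by (simp add: gram_apply_supported)
  then have "\<bar>mat_tvec m D (\<lambda>r. x r - mat_vec p D ah r) j\<bar> * q \<le> E * q + \<bar>gram_apply m D J d j\<bar> * q"
    using res_le q by (simp add: distrib_right[symmetric] mult_right_mono)
  also have "\<dots> \<le> E * q + real (card J) * \<mu> * lam"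
    using alpha_hat_shrinkage_abs_le[OF j, of lam a0] lam_pos unfolding d_def q_def by simp
  also have "\<dots> < lam * q"
    using noise_less unfolding q_def by (simp add: algebra_simps)
  finally show ?thesis unfolding ah_def using q by simp
qed

theorem alpha_hat_lasso_recovery:
  assumes "\<And>j. j \<in> J \<Longrightarrow> alo \<le> \<bar>a0 j\<bar>" and "lam \<le> 4/9 * alo"
  shows "unique_lasso_solution m p D x lam (alpha_hat m D J x lam a0)"
    and "sgn (alpha_hat m D J x lam a0 j) = sgn (a0 j)"
proof -
  let ?ah = "alpha_hat m D J x lam a0"
  show sgn: "sgn (?ah j) = sgn (a0 j)" for j
    using alpha_hat_sgn_eq[OF assms] .
  show "unique_lasso_solution m p D x lam ?ah"
  proof (rule unique_lasso_solutionI[OF support_subset])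
    show "\<And>j. j \<notin> J \<Longrightarrow> ?ah j = 0" by (rule alpha_hat_outside)
    show "mat_tvec m D (\<lambda>r. x r - mat_vec p D ?ah r) j = lam * sgn (?ah j)" if "j \<in> J" for j
    proof -
      have "gram_apply m D J ?ah j = mat_tvec m D (mat_vec p D ?ah) j"
        by (simp add: gram_apply_supported alpha_hat_outside)
      then show ?thesis
        unfolding mat_tvec_diff using alpha_hat_gram[OF that] sgn[of j] by simp
    qed
  qed (use lam_pos alpha_hat_residual_corr_less support_cols_independent in auto)
qed

end

end

section \<open>The dictionary path\<close>

lemma inner_cols_commute: "inner_cols m A B i j = inner_cols m B A j i"
  unfolding inner_cols_def by (simp add: mult.commute)

lemma abs_inner_cols_le_1:
  assumes "inner_cols m A A i i = 1" "inner_cols m B B j j = 1"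
  shows "\<bar>inner_cols m A B i j\<bar> \<le> 1"
  using abs_mat_tvec_le_L2_set[of m A i "\<lambda>r. B r j"] assms
  unfolding mat_tvec_def inner_cols_def L2_set_def by (simp add: power2_eq_square)

lemma abs_le_coherence:
  assumes "i < p" "j < p" "i \<noteq> j"
  shows "\<bar>inner_cols m D D i j\<bar> \<le> coherence m p D"
proof -
  have "finite {\<bar>inner_cols m D D i j\<bar> | i j. i < p \<and> j < p \<and> i \<noteq> j}"
    by (rule finite_subset[of _ "(\<lambda>(i, j). \<bar>inner_cols m D D i j\<bar>) ` ({..<p} \<times> {..<p})"]) auto
  then show ?thesis unfolding coherence_def using assms by (auto intro!: Max_ge)
qed

lemma coherence_nonneg: "0 \<le> coherence m p D"
proof (cases "p \<le> 1")
  case False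
  then have "\<bar>inner_cols m D D 0 1\<bar> \<le> coherence m p D" by (intro abs_le_coherence) auto
  then show ?thesis by linarith
qed (simp add: coherence_def)

lemma unit_sphere_p_abs_le_1:
  assumes "v \<in> unit_sphere_p p" "j < p"
  shows "\<bar>v j\<bar> \<le> 1"
proof -
  have "(v j)\<^sup>2 \<le> (\<Sum>j<p. (v j)\<^sup>2)" using assms(2) by (intro member_le_sum) auto
  then show ?thesis using assms(1) unfolding unit_sphere_p_def by (simp add: abs_square_le_1)
qed

lemma abs_sin_le_of_unit_sphere_p:
  assumes "v \<in> unit_sphere_p p" "j < p" "0 \<le> t"
  shows "\<bar>sin (v j * t)\<bar> \<le> t"
proof -
  have "\<bar>sin (v j * t)\<bar> \<le> \<bar>v j * t\<bar>" by (rule abs_sin_x_le_abs_x)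
  also have "\<dots> \<le> t"
    using unit_sphere_p_abs_le_1[OF assms(1,2)] assms(3) by (simp add: abs_mult mult_left_le_one_le)
  finally show ?thesis .
qed

lemma inner_cols_D_path:
  "inner_cols m (D_path D0 W v t) (D_path D0 W v t) i j =
     cos (v i * t) * cos (v j * t) * inner_cols m D0 D0 i j + cos (v i * t) * sin (v j * t) * inner_cols m D0 W i j
   + sin (v i * t) * cos (v j * t) * inner_cols m W D0 i j + sin (v i * t) * sin (v j * t) * inner_cols m W W i j"
  unfolding inner_cols_def D_path_def
  by (simp add: sum.distrib sum_distrib_left algebra_simps)

lemma D_path_unit_cols:
  assumes "D0 \<in> dict_set m p" "W \<in> W_set m p D0" "j < p"
  shows "inner_cols m (D_path D0 W v t) (D_path D0 W v t) j j = 1"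
proof -
  have "inner_cols m D0 D0 j j = 1" "inner_cols m W W j j = 1" "inner_cols m W D0 j j = 0"
    using assms unfolding dict_set_def W_set_def by auto
  then show ?thesis
    unfolding inner_cols_D_path inner_cols_commute[of m D0 W j j]
    by (simp flip: power2_eq_square)
qed

lemma abs_mult3_le:
  fixes a b c :: real
  shows "\<bar>a\<bar> \<le> A \<Longrightarrow> \<bar>b\<bar> \<le> B \<Longrightarrow> \<bar>c\<bar> \<le> C \<Longrightarrow> \<bar>a * b * c\<bar> \<le> A * B * C"
  unfolding abs_mult by (intro mult_mono) (auto intro: order_trans[OF abs_ge_zero])

lemma D_path_coherence_le:
  assumes D0: "D0 \<in> dict_set m p" and W: "W \<in> W_set m p D0" and v: "v \<in> unit_sphere_p p"
    and t: "0 \<le> t" and ij: "i < p" "j < p" "i \<noteq> j"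
  shows "\<bar>inner_cols m (D_path D0 W v t) (D_path D0 W v t) i j\<bar> \<le> coherence m p D0 + 3 * t"
proof -
  have unit: "inner_cols m D0 D0 i i = 1" "inner_cols m D0 D0 j j = 1"
    "inner_cols m W W i i = 1" "inner_cols m W W j j = 1"
    using D0 W ij unfolding dict_set_def W_set_def by auto
  have sin_le: "\<bar>sin (v i * t)\<bar> \<le> t" "\<bar>sin (v j * t)\<bar> \<le> t"
    using abs_sin_le_of_unit_sphere_p[OF v _ t] ij by auto
  let ?c = "\<lambda>k. cos (v k * t)" and ?s = "\<lambda>k. sin (v k * t)"
  let ?A = "?c i * ?c j * inner_cols m D0 D0 i j" and ?B = "?c i * ?s j * inner_cols m D0 W i j"
    and ?C = "?s i * ?c j * inner_cols m W D0 i j" and ?E = "?s i * ?s j * inner_cols m W W i j"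
  have "\<bar>?A\<bar> \<le> 1 * 1 * coherence m p D0"
    using abs_le_coherence[OF ij] by (intro abs_mult3_le) auto
  moreover have "\<bar>?c i * ?s j * inner_cols m D0 W i j\<bar> \<le> 1 * t * 1"
    using sin_le unit by (intro abs_mult3_le abs_inner_cols_le_1) auto
  moreover have "\<bar>?s i * ?c j * inner_cols m W D0 i j\<bar> \<le> t * 1 * 1"
    using sin_le unit by (intro abs_mult3_le abs_inner_cols_le_1) auto
  moreover have "\<bar>?s i * ?s j * inner_cols m W W i j\<bar> \<le> 1 * t * 1"
    using sin_le unit by (intro abs_mult3_le abs_inner_cols_le_1) auto
  moreover have "\<bar>?A + ?B + ?C + ?E\<bar> \<le> \<bar>?A\<bar> + \<bar>?B\<bar> + \<bar>?C\<bar> + \<bar>?E\<bar>"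
    by (intro order_trans[OF abs_triangle_ineq] add_right_mono abs_triangle_ineq3 abs_triangle_ineq)
  ultimately show ?thesis
    unfolding inner_cols_D_path by linarith
qed

lemma two_minus_two_cos_le: "2 - 2 * cos x \<le> (x::real)\<^sup>2"
proof -
  have "\<bar>sin (x / 2)\<bar>\<^sup>2 \<le> \<bar>x / 2\<bar>\<^sup>2"
    by (intro power_mono abs_sin_x_le_abs_x) simp
  then show ?thesis using cos_double_sin[of "x / 2"] by (simp add: power_divide)
qed

lemma L2_set_D_path_col_diff_le:
  assumes "D0 \<in> dict_set m p" "W \<in> W_set m p D0" "j < p"
  shows "L2_set (\<lambda>r. D0 r j - D_path D0 W v t r j) {..<m} \<le> \<bar>v j * t\<bar>"
proof -
  let ?c = "cos (v j * t)" and ?s = "sin (v j * t)"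
  have unit: "(\<Sum>r<m. (D0 r j)\<^sup>2) = 1" "(\<Sum>r<m. (W r j)\<^sup>2) = 1" and orth: "(\<Sum>r<m. D0 r j * W r j) = 0"
    using assms inner_cols_commute[of m W D0 j j]
    unfolding dict_set_def W_set_def inner_cols_def by (auto simp: power2_eq_square)
  have "(\<Sum>r<m. (D0 r j - D_path D0 W v t r j)\<^sup>2)
      = (\<Sum>r<m. (1 - ?c)\<^sup>2 * (D0 r j)\<^sup>2 - 2 * ((1 - ?c) * ?s) * (D0 r j * W r j) + ?s\<^sup>2 * (W r j)\<^sup>2)"
    unfolding D_path_def by (intro sum.cong refl) (simp add: power2_eq_square algebra_simps)
  also have "\<dots> = (1 - ?c)\<^sup>2 + ?s\<^sup>2"
    using unit orth by (simp add: sum.distrib sum_subtractf sum_distrib_left[symmetric])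
  also have "\<dots> = 2 - 2 * ?c"
    using sin_cos_squared_add[of "v j * t"] by (simp add: power2_diff)
  also have "\<dots> \<le> (v j * t)\<^sup>2" by (rule two_minus_two_cos_le)
  finally have "sqrt (\<Sum>r<m. (D0 r j - D_path D0 W v t r j)\<^sup>2) \<le> sqrt ((v j * t)\<^sup>2)"
    by (rule real_sqrt_le_mono)
  then show ?thesis unfolding L2_set_def by simp
qed

lemma L2_set_sum_le:
  assumes "finite J"
  shows "L2_set (\<lambda>r. \<Sum>j\<in>J. F r j) A \<le> (\<Sum>j\<in>J. L2_set (\<lambda>r. F r j) A)"
  using assms
proof (induction J rule: finite_induct)
  case (insert j J)
  have "L2_set (\<lambda>r. \<Sum>i\<in>insert j J. F r i) A = L2_set (\<lambda>r. F r j + (\<Sum>i\<in>J. F r i)) A"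
    using insert by simp
  also have "\<dots> \<le> L2_set (\<lambda>r. F r j) A + L2_set (\<lambda>r. \<Sum>i\<in>J. F r i) A"
    by (rule L2_set_triangle_ineq)
  also have "\<dots> \<le> (\<Sum>i\<in>insert j J. L2_set (\<lambda>r. F r i) A)"
    using insert by simp
  finally show ?case .
qed (simp add: L2_set_def)

lemma L2_set_mult_right: "L2_set (\<lambda>x. f x * c) A = L2_set f A * \<bar>c\<bar>"
  unfolding L2_set_def power_mult_distrib sum_distrib_right[symmetric] by (simp add: real_sqrt_mult)

lemma L2_set_mat_vec_D_path_diff_le:
  assumes D0: "D0 \<in> dict_set m p" and W: "W \<in> W_set m p D0" and v: "v \<in> unit_sphere_p p"
    and t: "0 \<le> t" and J: "J \<subseteq> {..<p}" and ahi: "0 \<le> ahi"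
    and a0: "\<And>j. j \<notin> J \<Longrightarrow> a0 j = 0" "\<And>j. j \<in> J \<Longrightarrow> \<bar>a0 j\<bar> \<le> ahi"
  shows "L2_set (\<lambda>r. mat_vec p D0 a0 r - mat_vec p (D_path D0 W v t) a0 r) {..<m}
           \<le> sqrt (real (card J)) * ahi * t"
proof -
  let ?D = "D_path D0 W v t"
  have fin: "finite J" using J finite_subset by blast
  have "mat_vec p D0 a0 r - mat_vec p ?D a0 r = (\<Sum>j\<in>J. (D0 r j - ?D r j) * a0 j)" for r
    using a0(1) by (simp add: mat_vec_supported[OF J] sum_subtractf left_diff_distrib)
  then have "L2_set (\<lambda>r. mat_vec p D0 a0 r - mat_vec p ?D a0 r) {..<m}
      \<le> (\<Sum>j\<in>J. L2_set (\<lambda>r. D0 r j - ?D r j) {..<m} * \<bar>a0 j\<bar>)"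
    using L2_set_sum_le[OF fin, of "\<lambda>r j. (D0 r j - ?D r j) * a0 j"] by (simp add: L2_set_mult_right)
  also have "\<dots> \<le> (\<Sum>j\<in>J. \<bar>v j\<bar> * t * ahi)"
    using a0(2) J L2_set_D_path_col_diff_le[OF D0 W, where v=v and t=t] t
    by (intro sum_mono mult_mono) (auto simp: abs_mult abs_of_nonneg[OF t])
  also have "\<dots> = t * ahi * (\<Sum>j\<in>J. \<bar>v j\<bar> * \<bar>1\<bar>)" by (simp add: sum_distrib_left mult_ac)
  also have "\<dots> \<le> t * ahi * (L2_set v J * L2_set (\<lambda>_. 1) J)"
    using ahi t by (intro mult_left_mono L2_set_mult_ineq) auto
  also have "\<dots> \<le> t * ahi * (1 * sqrt (real (card J)))"
  proof -
    have "(\<Sum>j\<in>J. (v j)\<^sup>2) \<le> (\<Sum>j<p. (v j)\<^sup>2)" using J by (intro sum_mono2) auto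
    then have "L2_set v J \<le> 1" using v unfolding unit_sphere_p_def L2_set_def by simp
    then have "L2_set v J * sqrt (real (card J)) \<le> 1 * sqrt (real (card J))"
      by (intro mult_right_mono) auto
    then show ?thesis
      using ahi t by (auto simp: L2_set_constant intro!: mult_left_mono)
  qed
  finally show ?thesis by (simp add: mult_ac)
qed

section \<open>Choice of the regularisation parameter\<close>

lemma Q_t_squared:
  assumes "real k * mu_t m p D0 t < 1"
  shows "(Q_t m p D0 k t)\<^sup>2 = 1 / (1 - real k * mu_t m p D0 t)"
  unfolding Q_t_def using assms by (simp add: power_divide)

lemma noise_margin_of_lambda:
  fixes \<nu> X t t' lam :: real
  assumes \<nu>: "0 \<le> \<nu>" "\<nu> < 1/2" and X: "0 \<le> X" and t: "0 \<le> t'" "t' \<le> t"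
    and lam: "X / (2 - 1 / (1 - \<nu>)) * t < lam"
  shows "0 < lam" and "X * t' * (1 - \<nu>) < lam * (1 - 2 * \<nu>)"
proof -
  define c where "c = 2 - 1 / (1 - \<nu>)"
  have c: "0 < c" "c * (1 - \<nu>) = 1 - 2 * \<nu>"
    using \<nu> unfolding c_def by (simp_all add: field_simps)
  have "0 \<le> X / c * t" using X c t by simp
  then show "0 < lam" using lam unfolding c_def by linarith
  have "X * t' * (1 - \<nu>) \<le> (X / c * t) * c * (1 - \<nu>)"
    using X t \<nu> c by (simp add: mult_left_mono mult_right_mono)
  also have "\<dots> < lam * c * (1 - \<nu>)"
    using lam c \<nu> unfolding c_def by (intro mult_strict_right_mono) auto
  finally show "X * t' * (1 - \<nu>) < lam * (1 - 2 * \<nu>)"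
    using c(2) by (simp add: mult.assoc)
qed

lemma D_path_lasso_recovery:
  assumes D0: "D0 \<in> dict_set m p" and W: "W \<in> W_set m p D0" and v: "v \<in> unit_sphere_p p"
    and t: "0 \<le> t'" "t' \<le> t" and J: "J \<subseteq> {..<p}"
    and coh: "real (card J) * mu_t m p D0 t < 1/2"
    and a0: "\<And>j. j \<notin> J \<Longrightarrow> a0 j = 0" "\<And>j. j \<in> J \<Longrightarrow> alo \<le> \<bar>a0 j\<bar>" "\<And>j. j \<in> J \<Longrightarrow> \<bar>a0 j\<bar> \<le> ahi"
    and ahi: "0 \<le> ahi"
    and lam: "sqrt (real (card J)) * ahi / (2 - (Q_t m p D0 (card J) t)\<^sup>2) * t < lam" "lam \<le> 4/9 * alo"
  shows "unique_lasso_solution m p (D_path D0 W v t') (mat_vec p D0 a0) lam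
           (alpha_hat m (D_path D0 W v t') J (mat_vec p D0 a0) lam a0)"
    and "sgn (alpha_hat m (D_path D0 W v t') J (mat_vec p D0 a0) lam a0 j) = sgn (a0 j)"
proof -
  let ?D = "D_path D0 W v t'" and ?\<mu> = "mu_t m p D0 t"
  have \<mu>: "0 \<le> ?\<mu>" using coherence_nonneg[of m p D0] t unfolding mu_t_def by simp
  interpret coherent_support m p ?D J ?\<mu>
  proof
    show "\<bar>inner_cols m ?D ?D i j\<bar> \<le> ?\<mu>" if "i < p" "j \<in> J" "i \<noteq> j" for i j
      using D_path_coherence_le[OF D0 W v t(1) that(1) _ that(3)] J that(2) t(2)
      unfolding mu_t_def by fastforce
  qed (use J D_path_unit_cols[OF D0 W] \<mu> coh in auto)
  have noise: "L2_set (\<lambda>r. mat_vec p D0 a0 r - mat_vec p ?D a0 r) {..<m} \<le> sqrt (real (card J)) * ahi * t'"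
    by (rule L2_set_mat_vec_D_path_diff_le[OF D0 W v t(1) J ahi a0(1) a0(3)])
  have "(Q_t m p D0 (card J) t)\<^sup>2 = 1 / (1 - real (card J) * ?\<mu>)"
    using coh by (intro Q_t_squared) simp
  moreover have "0 \<le> real (card J) * ?\<mu>" "0 \<le> sqrt (real (card J)) * ahi" using \<mu> ahi by simp_all
  ultimately have margin: "0 < lam"
    "sqrt (real (card J)) * ahi * t' * (1 - real (card J) * ?\<mu>) < lam * (1 - 2 * (real (card J) * ?\<mu>))"
    using noise_margin_of_lambda[OF _ coh _ t] lam(1) by auto
  show "unique_lasso_solution m p ?D (mat_vec p D0 a0) lam (alpha_hat m ?D J (mat_vec p D0 a0) lam a0)"
    by (rule alpha_hat_lasso_recovery(1)[OF _ noise margin(2,1) _ lam(2)]) (use a0 in auto)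
  show "sgn (alpha_hat m ?D J (mat_vec p D0 a0) lam a0 j) = sgn (a0 j)"
    by (rule alpha_hat_lasso_recovery(2)[OF _ noise margin(2,1) _ lam(2)]) (use a0 in auto)
qed

section \<open>The random signal\<close>

lemma (in prob_space) AE_abs_bounds_if_distr_eq:
  fixes X Y :: "'a \<Rightarrow> real"
  assumes X[measurable]: "X \<in> borel_measurable M" and Y[measurable]: "Y \<in> borel_measurable M"
    and same: "distr M borel X = distr M borel Y"
    and lo: "prob {w \<in> space M. \<bar>Y w\<bar> < lo} = 0" and hi: "prob {w \<in> space M. hi < \<bar>Y w\<bar>} = 0"
  shows "AE w in M. lo \<le> \<bar>X w\<bar> \<and> \<bar>X w\<bar> \<le> hi"
proof -
  have "{w \<in> space M. \<bar>Y w\<bar> < lo} \<in> sets M" "{w \<in> space M. hi < \<bar>Y w\<bar>} \<in> sets M"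
    by measurable
  then have "AE w in M. w \<notin> {w \<in> space M. \<bar>Y w\<bar> < lo}" "AE w in M. w \<notin> {w \<in> space M. hi < \<bar>Y w\<bar>}"
    using prob_eq_0 lo hi by blast+
  then have "AE w in M. lo \<le> \<bar>Y w\<bar> \<and> \<bar>Y w\<bar> \<le> hi"
    using AE_space by eventually_elim auto
  then have "AE y in distr M borel Y. lo \<le> \<bar>y\<bar> \<and> \<bar>y\<bar> \<le> hi"
    by (subst AE_distr_iff) auto
  then have "AE y in distr M borel X. lo \<le> \<bar>y\<bar> \<and> \<bar>y\<bar> \<le> hi"
    unfolding same .
  then show ?thesis
    by (subst (asm) AE_distr_iff) auto
qed

theorem proposition4:
  fixes M :: "'w measure"
    and m p k :: nat
    and D0 :: "nat \<Rightarrow> nat \<Rightarrow> real"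
    and t t' lam alo ahi :: real
    and J :: "'w \<Rightarrow> nat set"
    and a :: "'w \<Rightarrow> nat \<Rightarrow> real"
    and alpha :: "'w \<Rightarrow> real"
    and alpha0 :: "'w \<Rightarrow> nat \<Rightarrow> real"
  assumes "prob_space M"
    and "D0 \<in> dict_set m p"
    and "real k * mu_t m p D0 t < 1/2"
    \<comment> \<open>random support J with |J| = k\<close>
    and "J \<in> measurable M (count_space (Pow {..<p}))"
    and "\<forall>w\<in>space M. card (J w) = k"
    \<comment> \<open>on J: i.i.d. copies of alpha; support and coefficients independent\<close>
    and "alpha \<in> borel_measurable M"
    and "\<forall>j<p. (\<lambda>w. a w j) \<in> borel_measurable M"
    and "prob_space.indep_vars M (\<lambda>_. borel) (\<lambda>j w. a w j) {..<p}"
    and "\<forall>j<p. distr M borel (\<lambda>w. a w j) = distr M borel alpha"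
    and "\<forall>A B. A \<subseteq> Pow {..<p} \<longrightarrow> B \<in> sets (PiM {..<p} (\<lambda>_. borel :: real measure)) \<longrightarrow>
           measure M {w\<in>space M. J w \<in> A \<and> restrict (a w) {..<p} \<in> B} =
           measure M {w\<in>space M. J w \<in> A} * measure M {w\<in>space M. restrict (a w) {..<p} \<in> B}"
    and "\<forall>w\<in>space M. \<forall>j. alpha0 w j = (if j \<in> J w then a w j else 0)"
    \<comment> \<open>sub-Gaussian alpha\<close>
    and "\<exists>c. \<forall>s. integrable M (\<lambda>w. exp (s * alpha w)) \<and>
            prob_space.expectation M (\<lambda>w. exp (s * alpha w)) \<le> exp (c\<^sup>2 * s\<^sup>2 / 2)"
    \<comment> \<open>Pr(|alpha| < alo) = 0 and Pr(|alpha| > ahi) = 0, with ahi \<ge> alo > 0\<close>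
    and "0 < alo" and "alo \<le> ahi"
    and "measure M {w\<in>space M. \<bar>alpha w\<bar> < alo} = 0"
    and "measure M {w\<in>space M. \<bar>alpha w\<bar> > ahi} = 0"
    \<comment> \<open>regularisation parameter and t'\<close>
    and "sqrt (real k) * ahi / (2 - (Q_t m p D0 k t)\<^sup>2) * t < lam"
    and "lam \<le> 4/9 * alo"
    and "0 \<le> t'" and "t' \<le> t"
  shows "AE w in M. \<forall>W v. W \<in> W_set m p D0 \<longrightarrow> v \<in> unit_sphere_p p \<longrightarrow>
           (let D = D_path D0 W v t';
                x = mat_vec p D0 (alpha0 w);
                ah = alpha_hat m D (J w) x lam (alpha0 w)
            in unique_lasso_solution m p D x lam ah \<and>
               (\<forall>j<p. sgn (ah j) = sgn (alpha0 w j)))"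
proof -
  interpret prob_space M by fact
  have "AE w in M. alo \<le> \<bar>a w j\<bar> \<and> \<bar>a w j\<bar> \<le> ahi" if "j < p" for j
    using that assms(6,7,9,15,16) by (intro AE_abs_bounds_if_distr_eq) auto
  then have "AE w in M. \<forall>j. j < p \<longrightarrow> alo \<le> \<bar>a w j\<bar> \<and> \<bar>a w j\<bar> \<le> ahi"
    by (subst AE_all_countable) auto
  with AE_space show ?thesis
  proof eventually_elim
    case (elim w)
    have J: "J w \<subseteq> {..<p}" using measurable_space[OF assms(4) elim(1)] by auto
    have "alpha0 w j = (if j \<in> J w then a w j else 0)" for j using assms(11) elim(1) by blast
    then have a0: "\<And>j. j \<notin> J w \<Longrightarrow> alpha0 w j = 0"
      "\<And>j. j \<in> J w \<Longrightarrow> alo \<le> \<bar>alpha0 w j\<bar>" "\<And>j. j \<in> J w \<Longrightarrow> \<bar>alpha0 w j\<bar> \<le> ahi"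
      using elim(2) J by auto
    note recovery = D_path_lasso_recovery[OF assms(2) _ _ assms(19,20) J _ a0 _ _ assms(18)]
    show ?case
      unfolding Let_def using recovery assms(3,5,13,14,17) elim(1) by auto
  qed
qed

end
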